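(* Let $S\subset\mathbb{R}^d$ be a compact set and, for each $n$, let $\mathcal{X}_n=\{X_1,\dots,X_n\}$ be an $\mathcal{AI}(\alpha_n)$ sample of points whose common marginal distribution $P_X$ has support $S$, where $S$ is standard with respect to $P_X$ with constants $\delta$ and $\lambda$, and where $\alpha_n$ satisfies $\sum_{n=1}^{+\infty}\frac{\alpha_n}{n^\beta\log n}<+\infty$ for any $\beta>1$. Then $$\limsup_{n\to\infty}\left(\frac{n}{\log n}\right)^{1/d}d_H(\mathcal{X}_n,S)\leq\left(\frac{2}{\delta\omega_d}\right)^{1/d}\quad\text{a.s.}$$
   Context: $d_H(S_1,S_2)=\max\{\sup_{x\in S_1}\inf_{y\in S_2}\|x-y\|,\sup_{y\in S_2}\inf_{x\in S_1}\|x-y\|\}$ is the Hausdorff distance. $\omega_d$ is the Lebesgue measure $\mu_d$ of the unit ball in $\mathbb{R}^d$. $\mathcal{AI}(\alpha_n)$: random vectors $X_1,\dots,X_n$ with joint density $f_{(X_1,\dots,X_n)}$ and marginal densities $f_{X_i}$ satisfy $\sup_{x}\left|\frac{f_{(X_1,\dots,X_n)}(x)-f_{X_1}(x_1)\cdots f_{X_n}(x_n)}{f_{X_1}(x_1)\cdots f_{X_n}(x_n)}\right|\leq\alpha_n$. $S$ is standard with constants $\delta,\lambda$ w.r.t. $\nu$ if for all $x\in S$ and $0<\varepsilon\le\lambda$, $\nu(B(x,\varepsilon)\cap S)\geq\delta\mu_d(B(x,\varepsilon))$. *)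

theory Defs
  imports "HOL-Analysis.Analysis" "HOL-Probability.Probability"
begin

definition hausdorff_dist :: "'a::metric_space set \<Rightarrow> 'a set \<Rightarrow> real" where
  "hausdorff_dist A B = max (SUP x\<in>A. infdist x B) (SUP y\<in>B. infdist y A)"

definition unit_ball_vol :: "'a::euclidean_space itself \<Rightarrow> real" where
  "unit_ball_vol _ = measure lborel (ball (0::'a) 1)"

definition measure_support :: "'a::metric_space measure \<Rightarrow> 'a set" where
  "measure_support P = {x. \<forall>e>0. emeasure P (ball x e) > 0}"

definition standard_set :: "'a::euclidean_space set \<Rightarrow> 'a measure \<Rightarrow> real \<Rightarrow> real \<Rightarrow> bool" where
  "standard_set S \<nu> \<delta> lam \<longleftrightarrow>
     (\<forall>x\<in>S. \<forall>\<epsilon>. 0 < \<epsilon> \<and> \<epsilon> \<le> lam \<longrightarrow>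
        measure \<nu> (ball x \<epsilon> \<inter> S) \<ge> \<delta> * measure lborel (ball x \<epsilon>))"

text \<open>The AI(alpha) condition for a joint density g of (X_1,...,X_n) (on functions with
  domain {1..n}) and common marginal density f:
  sup_x |g(x) - prod f(x_i)| / prod f(x_i) <= alpha, where the ratio is read as +infinity
  when the product vanishes but g does not (and as 0 when both vanish).\<close>
definition AI_cond :: "nat \<Rightarrow> ((nat \<Rightarrow> 'a) \<Rightarrow> real) \<Rightarrow> ('a \<Rightarrow> real) \<Rightarrow> real \<Rightarrow> bool" where
  "AI_cond n g f \<alpha> \<longleftrightarrow>
     (\<forall>x\<in>extensional {1..n}.
        let p = (\<Prod>i\<in>{1..n}. f (x i)) in
          (p > 0 \<longrightarrow> \<bar>g x - p\<bar> / p \<le> \<alpha>) \<and> (p = 0 \<longrightarrow> g x = 0))"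

end

theory Submission
  imports Defs "HOL-Real_Asymp.Real_Asymp"
begin

text \<open>Fix \<eta> > 0 and put t n = (ln n / n) powr (1/d) and c = (2 / (\<delta> \<omega>_d)) powr (1/d).
  Cover S by a net of mesh c \<eta> t n; by a volume argument it has O(n / ln n) points. Since S is
  standard, a ball of radius c (1 + \<eta>) t n around a net point has P_X-mass at least
  2 (1 + \<eta>) ln n / n, and the AI(\<alpha>_n) bound on the joint density makes the probability that
  no sample point falls into it at most (1 + \<alpha>_n) n powr (-2 (1 + \<eta>)). Summed over the net
  this is O((1 + \<alpha>_n) / (n powr (1 + 2 \<eta>) ln n)), which is summable, so by Borel--Cantelli
  almost surely every net ball eventually contains a sample point. Then
  d_H(X_n, S) \<le> c (1 + 2 \<eta>) t n eventually, and letting \<eta> tend to 0 along a sequence bounds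
  the limsup by c.\<close>

section \<open>Support of a measure\<close>

lemma AE_in_measure_support:
  fixes Q :: "'a::{metric_space, second_countable_topology} measure"
  assumes "sets Q = sets borel"
  shows "AE x in Q. x \<in> measure_support Q"
proof -
  define \<F> where "\<F> = {ball x e | x e. 0 < e \<and> emeasure Q (ball x e) = 0}"
  obtain \<F>' where \<F>': "\<F>' \<subseteq> \<F>" "countable \<F>'" "\<Union>\<F>' = \<Union>\<F>"
    using Lindelof[of \<F>] unfolding \<F>_def by blast
  have "(\<Union>B\<in>\<F>'. B) \<in> null_sets Q"
    using \<F>'(1) assms by (intro null_sets_UN'[OF \<F>'(2)]) (auto simp: \<F>_def null_sets_def)
  moreover have "{x \<in> space Q. x \<notin> measure_support Q} \<subseteq> (\<Union>B\<in>\<F>'. B)"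
  proof
    fix x assume "x \<in> {x \<in> space Q. x \<notin> measure_support Q}"
    then obtain e where "0 < e" "emeasure Q (ball x e) = 0"
      unfolding measure_support_def by (auto simp: not_gr_zero)
    then have "x \<in> \<Union>\<F>"
      unfolding \<F>_def by (auto intro!: exI[of _ "ball x e"])
    then show "x \<in> (\<Union>B\<in>\<F>'. B)"
      using \<F>'(3) by simp
  qed
  ultimately show ?thesis by (rule AE_I')
qed

lemma AE_sample_in_support:
  fixes X :: "nat \<Rightarrow> 's \<Rightarrow> 'a::euclidean_space"
  assumes marg: "\<And>i. i \<ge> 1 \<Longrightarrow> distributed M lborel (X i) (\<lambda>x. ennreal (f x))"
    and supp: "measure_support (distr M lborel (X 1)) = S"
  shows "AE \<omega> in M. \<forall>i\<ge>1. X i \<omega> \<in> S"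
proof -
  have "AE \<omega> in M. X i \<omega> \<in> S" if "i \<ge> 1" for i
  proof -
    have "distr M lborel (X i) = distr M lborel (X 1)"
      using distributed_distr_eq_density[OF marg[OF that]] distributed_distr_eq_density[OF marg[of 1]]
      by simp
    then have "AE x in distr M lborel (X i). x \<in> S"
      using AE_in_measure_support[of "distr M lborel (X i)"] supp by simp
    then show ?thesis
      by (rule AE_distrD[OF distributed_measurable[OF marg[OF that]]])
  qed
  then show ?thesis
    by (subst AE_all_countable) auto
qed

section \<open>Nets in bounded sets\<close>

lemma separated_card_bound:
  fixes F :: "'a::euclidean_space set"
  assumes "finite F" "F \<subseteq> cball 0 R" "0 < \<rho>" "\<rho> \<le> 2" "0 \<le> R"
    and sep: "\<And>x y. x \<in> F \<Longrightarrow> y \<in> F \<Longrightarrow> x \<noteq> y \<Longrightarrow> \<rho> \<le> dist x y"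
  shows "real (card F) * (\<rho>/2) ^ DIM('a) \<le> (R + 1) ^ DIM('a)"
proof -
  let ?w = "measure lborel (ball (0::'a) 1)"
  have fm: "ball c s \<in> fmeasurable lborel" for c :: 'a and s
    unfolding fmeasurable_def using emeasure_lborel_ball_finite by auto
  have vol: "measure lborel (ball c s) = s ^ DIM('a) * ?w" if "0 \<le> s" for c :: 'a and s
    using content_ball_conv_unit_ball[OF that, of c] by simp
  have disj: "pairwise (\<lambda>x y. disjnt (ball x (\<rho>/2)) (ball y (\<rho>/2))) F"
    using sep by (auto simp: pairwise_def disjnt_def intro!: disjoint_ballI)
  have inside: "(\<Union>x\<in>F. ball x (\<rho>/2)) \<subseteq> ball 0 (R + 1)"
  proof
    fix y assume "y \<in> (\<Union>x\<in>F. ball x (\<rho>/2))"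
    then obtain x where "x \<in> F" "dist x y < \<rho>/2" by auto
    moreover have "norm y \<le> norm x + dist x y"
      by (metis dist_0_norm dist_commute dist_triangle)
    ultimately show "y \<in> ball 0 (R + 1)" using assms(2,4) by auto
  qed
  have "real (card F) * ((\<rho>/2) ^ DIM('a) * ?w) = (\<Sum>x\<in>F. measure lborel (ball x (\<rho>/2)))"
    using vol[of "\<rho>/2"] assms(3) by simp
  also have "\<dots> = measure lborel (\<Union>x\<in>F. ball x (\<rho>/2))"
    using disj fm assms(1) by (intro measure_UNION'[symmetric]) auto
  also have "\<dots> \<le> measure lborel (ball (0::'a) (R + 1))"
    using inside fm assms(1) by (intro measure_mono_fmeasurable) (auto intro: fmeasurableD)
  also have "\<dots> = (R + 1) ^ DIM('a) * ?w"
    using vol[of "R + 1"] assms(5) by simp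
  finally show ?thesis
    using content_ball_pos[of 1 "0::'a"] by (simp only: mult.assoc[symmetric] mult_le_cancel_right_pos)
qed

lemma finite_net_card_bound:
  fixes S :: "'a::euclidean_space set"
  assumes "S \<subseteq> cball 0 R" "0 \<le> R" "0 < \<rho>" "\<rho> \<le> 2"
  obtains C where "finite C" "C \<subseteq> S" "S \<subseteq> (\<Union>c\<in>C. ball c \<rho>)"
    "real (card C) \<le> (2 * (R + 1) / \<rho>) ^ DIM('a)"
proof -
  define sep where "sep F \<longleftrightarrow> finite F \<and> F \<subseteq> S \<and> (\<forall>x\<in>F. \<forall>y\<in>F. x \<noteq> y \<longrightarrow> \<rho> \<le> dist x y)"
    for F
  have card_sep: "real (card F) \<le> (2 * (R + 1) / \<rho>) ^ DIM('a)" if "sep F" for F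
  proof -
    have "real (card F) * (\<rho>/2) ^ DIM('a) \<le> (R + 1) ^ DIM('a)"
      using that assms unfolding sep_def by (intro separated_card_bound) auto
    moreover have "(2 * (R + 1) / \<rho>) ^ DIM('a) = (R + 1) ^ DIM('a) / (\<rho>/2) ^ DIM('a)"
      by (simp add: power_divide[symmetric] algebra_simps)
    ultimately show ?thesis
      using assms(3) by (simp add: pos_le_divide_eq)
  qed
  \<comment> \<open>A separated subset of maximal cardinality is a net.\<close>
  obtain F where "sep F" and F_max: "\<And>G. sep G \<Longrightarrow> card G \<le> card F"
  proof -
    have "card F < nat \<lceil>(2 * (R + 1) / \<rho>) ^ DIM('a)\<rceil> + 1" if "sep F" for F
      using card_sep[OF that] by linarith
    moreover have "sep {}" unfolding sep_def by simp
    ultimately show ?thesis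
      using ex_has_greatest_nat[of sep "{}" card] that by metis
  qed
  have "S \<subseteq> (\<Union>c\<in>F. ball c \<rho>)"
  proof
    fix x assume "x \<in> S"
    show "x \<in> (\<Union>c\<in>F. ball c \<rho>)"
    proof (rule ccontr)
      assume "x \<notin> (\<Union>c\<in>F. ball c \<rho>)"
      then have far: "\<forall>c\<in>F. \<rho> \<le> dist x c" by (auto simp: dist_commute not_less)
      then have "x \<notin> F" using assms(3) by fastforce
      have "sep (insert x F)"
        using \<open>sep F\<close> far \<open>x \<in> S\<close> unfolding sep_def by (auto simp: dist_commute)
      then have "card (insert x F) \<le> card F" by (rule F_max)
      then show False
        using \<open>x \<notin> F\<close> \<open>sep F\<close> unfolding sep_def by simp
    qed
  qed
  then show ?thesis
    using that \<open>sep F\<close> card_sep unfolding sep_def by blast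
qed

lemma hausdorff_dist_le_net:
  fixes A S :: "'a::metric_space set"
  assumes "A \<subseteq> S" "A \<noteq> {}" "S \<noteq> {}"
    and cover: "S \<subseteq> (\<Union>z\<in>C. ball z \<rho>)"
    and hit: "\<And>z. z \<in> C \<Longrightarrow> \<exists>a\<in>A. dist z a < r"
    and "0 \<le> r" "0 \<le> \<rho>"
  shows "hausdorff_dist A S \<le> r + \<rho>"
proof -
  have "infdist a S \<le> r + \<rho>" if "a \<in> A" for a
    using that assms(1,6,7) by (auto simp: infdist_zero)
  moreover have "infdist y A \<le> r + \<rho>" if "y \<in> S" for y
  proof -
    obtain z where z: "z \<in> C" "dist z y < \<rho>" using cover \<open>y \<in> S\<close> by auto
    then obtain a where a: "a \<in> A" "dist z a < r" using hit by blast
    have "infdist y A \<le> dist y a" using a(1) by (rule infdist_le)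
    also have "\<dots> \<le> dist y z + dist z a" by (rule dist_triangle)
    finally show ?thesis using z a by (simp add: dist_commute)
  qed
  ultimately show ?thesis
    unfolding hausdorff_dist_def using assms(2,3) by (auto intro!: cSUP_least)
qed

section \<open>Samples with almost independent coordinates\<close>

lemma AI_cond_le:
  assumes "AI_cond n g f a" "\<And>y. 0 \<le> f y" "x \<in> extensional {1..n}"
  shows "g x \<le> (1 + a) * (\<Prod>i\<in>{1..n}. f (x i))"
proof -
  define p where "p = (\<Prod>i\<in>{1..n}. f (x i))"
  have "0 \<le> p" unfolding p_def using assms(2) by (simp add: prod_nonneg)
  moreover have "(0 < p \<longrightarrow> \<bar>g x - p\<bar> / p \<le> a) \<and> (p = 0 \<longrightarrow> g x = 0)"
    using assms(1,3) unfolding AI_cond_def Let_def p_def by blast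
  ultimately have "g x \<le> p + a * p"
    by (cases "p = 0") (auto simp: divide_le_eq abs_le_iff)
  then show ?thesis unfolding p_def by (simp add: algebra_simps)
qed

lemma AI_cond_indicator_PiE_le:
  assumes "AI_cond n g f a" "\<And>y. 0 \<le> f y" "0 \<le> 1 + a" "x \<in> extensional {1..n}"
  shows "ennreal (g x) * indicator (PiE {1..n} (\<lambda>_. A)) x
    \<le> ennreal (1 + a) * (\<Prod>i\<in>{1..n}. ennreal (f (x i)) * indicator A (x i))"
proof (cases "x \<in> PiE {1..n} (\<lambda>_. A)")
  case True
  have "ennreal (g x) \<le> ennreal ((1 + a) * (\<Prod>i\<in>{1..n}. f (x i)))"
    using AI_cond_le[OF assms(1,2,4)] by (rule ennreal_leI)
  also have "\<dots> = ennreal (1 + a) * (\<Prod>i\<in>{1..n}. ennreal (f (x i)) * indicator A (x i))"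
    using True assms(2,3) by (auto simp: ennreal_mult prod_nonneg prod_ennreal PiE_iff intro!: prod.cong)
  finally show ?thesis using True by simp
qed simp

lemma AI_cond_nonneg:
  assumes "AI_cond n g f a" "\<And>y. 0 \<le> f y" "0 < f y"
  shows "0 \<le> a"
proof -
  define x where "x = (\<lambda>i\<in>{1..n}. y)"
  have p: "(\<Prod>i\<in>{1..n}. f (x i)) = f y ^ n"
    unfolding x_def by simp
  have "let p = \<Prod>i\<in>{1..n}. f (x i) in (0 < p \<longrightarrow> \<bar>g x - p\<bar> / p \<le> a) \<and> (p = 0 \<longrightarrow> g x = 0)"
    using assms(1) unfolding AI_cond_def x_def by blast
  then have "\<bar>g x - f y ^ n\<bar> / f y ^ n \<le> a"
    using assms(3) unfolding p Let_def by simp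
  moreover have "0 \<le> \<bar>g x - f y ^ n\<bar> / f y ^ n" using assms(3) by simp
  ultimately show ?thesis by linarith
qed

lemma distributed_density_pos_somewhere:
  assumes "prob_space M" "distributed M lborel X (\<lambda>x. ennreal (f x))"
  shows "\<exists>y. 0 < f y"
proof (rule ccontr)
  assume "\<not> (\<exists>y. 0 < f y)"
  then have "(\<lambda>x. ennreal (f x)) = (\<lambda>_. 0)"
    by (auto simp: ennreal_eq_0_iff not_less)
  then have "emeasure (distr M lborel X) (space lborel) = 0"
    using distributed_distr_eq_density[OF assms(2)] by (simp add: emeasure_density)
  moreover have "prob_space (distr M lborel X)"
    using prob_space.prob_space_distr[OF assms(1) distributed_measurable[OF assms(2)]] .
  ultimately show False
    using prob_space.emeasure_space_1 by fastforce
qed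

lemma prob_sample_avoids_le:
  fixes X :: "nat \<Rightarrow> 's \<Rightarrow> 'a::euclidean_space"
  assumes M: "prob_space M" and f_nonneg: "\<And>y. 0 \<le> f y"
    and marg: "distributed M lborel (X 1) (\<lambda>x. ennreal (f x))"
    and joint: "distributed M (PiM {1..n} (\<lambda>_. lborel)) (\<lambda>\<omega>. \<lambda>i\<in>{1..n}. X i \<omega>) (\<lambda>x. ennreal (g x))"
    and AI: "AI_cond n g f a" and a: "0 \<le> 1 + a" and B: "B \<in> sets borel"
  shows "measure M {\<omega>\<in>space M. \<forall>i\<in>{1..n}. X i \<omega> \<notin> B}
    \<le> (1 + a) * (1 - measure (distr M lborel (X 1)) B) ^ n"
proof -
  interpret M: prob_space M by (rule M)
  interpret product_sigma_finite "\<lambda>_::nat. lborel :: 'a measure"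
    by (intro product_sigma_finite.intro) (rule sigma_finite_lborel)
  define P where "P = distr M lborel (X 1)"
  interpret P: prob_space P
    unfolding P_def using prob_space.prob_space_distr[OF M distributed_measurable[OF marg]] .
  have P_density: "P = density lborel f"
    unfolding P_def using distributed_distr_eq_density[OF marg] by simp
  let ?E = "PiE {1..n} (\<lambda>_. -B)"
  let ?Pn = "PiM {1..n} (\<lambda>_. lborel :: 'a measure)"
  have f_meas: "(\<lambda>x. ennreal (f x)) \<in> borel_measurable lborel"
    using distributed_borel_measurable[OF marg] .
  have cB: "-B \<in> sets lborel" using B by simp
  have "?E \<in> sets ?Pn"
    using cB by (intro sets_PiM_I_finite) auto
  moreover have "{\<omega>\<in>space M. \<forall>i\<in>{1..n}. X i \<omega> \<notin> B} = (\<lambda>\<omega>. \<lambda>i\<in>{1..n}. X i \<omega>) -` ?E \<inter> space M"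
    by (auto simp: restrict_PiE_iff Pi_def)
  ultimately have "emeasure M {\<omega>\<in>space M. \<forall>i\<in>{1..n}. X i \<omega> \<notin> B} = (\<integral>\<^sup>+x. ennreal (g x) * indicator ?E x \<partial>?Pn)"
    using distributed_emeasure[OF joint] by simp
  also have "\<dots> \<le> (\<integral>\<^sup>+x. ennreal (1 + a) * (\<Prod>i\<in>{1..n}. ennreal (f (x i)) * indicator (-B) (x i)) \<partial>?Pn)"
    by (intro nn_integral_mono AI_cond_indicator_PiE_le[OF AI f_nonneg a]) (simp add: space_PiM PiE_def)
  also have "\<dots> = ennreal (1 + a) * (\<integral>\<^sup>+x. (\<Prod>i\<in>{1..n}. ennreal (f (x i)) * indicator (-B) (x i)) \<partial>?Pn)"
    by (rule nn_integral_cmult) (use cB f_meas in measurable)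
  also have "(\<integral>\<^sup>+x. (\<Prod>i\<in>{1..n}. ennreal (f (x i)) * indicator (-B) (x i)) \<partial>?Pn)
      = (\<Prod>i\<in>{1..n}. \<integral>\<^sup>+y. ennreal (f y) * indicator (-B) y \<partial>lborel)"
    by (rule product_nn_integral_prod) (use cB f_meas in auto)
  also have "(\<integral>\<^sup>+y. ennreal (f y) * indicator (-B) y \<partial>lborel) = emeasure P (-B)"
    using cB f_meas by (simp add: P_density emeasure_density)
  also have "emeasure P (-B) = ennreal (1 - measure P B)"
    using P.prob_compl[of B] B P.emeasure_eq_measure by (simp add: Compl_eq_Diff_UNIV P_def)
  finally have "emeasure M {\<omega>\<in>space M. \<forall>i\<in>{1..n}. X i \<omega> \<notin> B} \<le> ennreal ((1 + a) * (1 - measure P B) ^ n)"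
    using a P.prob_le_1[of B] by (simp add: ennreal_mult ennreal_power)
  moreover have "0 \<le> (1 + a) * (1 - measure P B) ^ n"
    using a P.prob_le_1[of B] by simp
  ultimately show ?thesis
    unfolding P_def by (simp add: M.emeasure_eq_measure)
qed

lemma one_minus_power_le_exp:
  fixes q :: real
  assumes "q \<le> 1"
  shows "(1 - q) ^ n \<le> exp (- (real n * q))"
proof -
  have "(1 - q) ^ n \<le> exp (- q) ^ n"
    using assms exp_ge_add_one_self[of "-q"] by (intro power_mono) auto
  then show ?thesis by (simp add: exp_of_nat_mult[symmetric])
qed

lemma unit_ball_vol_pos: "0 < unit_ball_vol TYPE('a::euclidean_space)"
  unfolding unit_ball_vol_def by (rule content_ball_pos) simp

lemma prob_sample_misses_ball_le:
  fixes X :: "nat \<Rightarrow> 's \<Rightarrow> 'a::euclidean_space"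
  assumes "prob_space M" "\<And>y. 0 \<le> f y"
    and marg: "distributed M lborel (X 1) (\<lambda>x. ennreal (f x))"
    and joint: "distributed M (PiM {1..n} (\<lambda>_. lborel)) (\<lambda>\<omega>. \<lambda>i\<in>{1..n}. X i \<omega>) (\<lambda>x. ennreal (g x))"
    and "AI_cond n g f a" "0 \<le> a"
    and std: "standard_set S (distr M lborel (X 1)) \<delta> lam"
    and "z \<in> S" "0 < r" "r \<le> lam"
  shows "measure M {\<omega>\<in>space M. \<forall>i\<in>{1..n}. X i \<omega> \<notin> ball z r}
    \<le> (1 + a) * exp (- (real n * (\<delta> * unit_ball_vol TYPE('a)) * r ^ DIM('a)))"
proof -
  define P where "P = distr M lborel (X 1)"
  interpret P: prob_space P
    unfolding P_def using prob_space.prob_space_distr[OF assms(1) distributed_measurable[OF marg]] .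
  have "\<delta> * unit_ball_vol TYPE('a) * r ^ DIM('a) = \<delta> * measure lborel (ball z r)"
    using content_ball_conv_unit_ball[of r z] \<open>0 < r\<close> by (simp add: unit_ball_vol_def)
  also have "\<dots> \<le> measure P (ball z r \<inter> S)"
    using std assms(8-10) unfolding standard_set_def P_def by blast
  also have "\<dots> \<le> measure P (ball z r)"
    by (rule P.finite_measure_mono) (auto simp: P_def)
  finally have mass: "\<delta> * unit_ball_vol TYPE('a) * r ^ DIM('a) \<le> measure P (ball z r)" .
  have "measure M {\<omega>\<in>space M. \<forall>i\<in>{1..n}. X i \<omega> \<notin> ball z r} \<le> (1 + a) * (1 - measure P (ball z r)) ^ n"
    unfolding P_def using assms(1-6) by (intro prob_sample_avoids_le) auto
  also have "\<dots> \<le> (1 + a) * exp (- (real n * measure P (ball z r)))"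
    using \<open>0 \<le> a\<close> by (intro mult_left_mono one_minus_power_le_exp P.prob_le_1) auto
  also have "\<dots> \<le> (1 + a) * exp (- (real n * (\<delta> * unit_ball_vol TYPE('a)) * r ^ DIM('a)))"
    using \<open>0 \<le> a\<close> mass by (intro mult_left_mono) (auto simp: mult.assoc mult_left_mono)
  finally show ?thesis .
qed

section \<open>Borel--Cantelli over a net\<close>

lemma sets_sample_avoids:
  fixes X :: "nat \<Rightarrow> 's \<Rightarrow> 'a::topological_space"
  assumes "\<And>i. i \<in> {1..n} \<Longrightarrow> X i \<in> borel_measurable M" "B \<in> sets borel"
  shows "{\<omega>\<in>space M. \<forall>i\<in>{1..n}. X i \<omega> \<notin> B} \<in> sets M"
proof (intro sets.sets_Collect_finite_All)
  fix i assume "i \<in> {1..n}"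
  then have "X i -` (- B) \<inter> space M \<in> sets M"
    using assms by (intro measurable_sets[of _ _ borel]) auto
  then show "{\<omega> \<in> space M. X i \<omega> \<notin> B} \<in> sets M"
    by (simp add: vimage_def Int_def conj_commute)
qed simp

lemma AE_eventually_avoids_finite_families:
  assumes "prob_space M"
    and fin: "\<And>n. n \<ge> N \<Longrightarrow> finite (C n)"
    and E_sets: "\<And>n z. n \<ge> N \<Longrightarrow> z \<in> C n \<Longrightarrow> E n z \<in> sets M"
    and E_le: "\<And>n z. n \<ge> N \<Longrightarrow> z \<in> C n \<Longrightarrow> measure M (E n z) \<le> p n"
    and card_le: "\<And>n. n \<ge> N \<Longrightarrow> real (card (C n)) * p n \<le> q n"
    and "summable q"
  shows "AE \<omega> in M. eventually (\<lambda>n. \<forall>z\<in>C n. \<omega> \<notin> E n z) sequentially"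
proof -
  interpret prob_space M by fact
  define A where "A n = (if n \<ge> N then \<Union>z\<in>C n. E n z else {})" for n
  have A_sets: "A n \<in> sets M" for n
    using fin E_sets by (auto simp: A_def)
  have "measure M (A n) \<le> q n" if "n \<ge> N" for n
  proof -
    have "measure M (A n) \<le> (\<Sum>z\<in>C n. measure M (E n z))"
      unfolding A_def using that fin E_sets by (auto intro!: finite_measure_subadditive_finite)
    also have "\<dots> \<le> real (card (C n)) * p n"
      using sum_mono[of "C n" "\<lambda>z. measure M (E n z)" "\<lambda>_. p n"] E_le that by simp
    also have "\<dots> \<le> q n"
      using card_le that .
    finally show ?thesis .
  qed
  then have "summable (\<lambda>n. measure M (A n))"
    by (intro summable_comparison_test'[OF \<open>summable q\<close>, of N]) auto
  then have "AE \<omega> in M. eventually (\<lambda>n. \<omega> \<in> space M - A n) sequentially"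
    using A_sets by (intro borel_cantelli_AE1) (auto simp: less_top[symmetric])
  then show ?thesis
  proof (elim AE_mp, intro AE_I2 impI)
    fix \<omega> assume "\<omega> \<in> space M" and avoids: "eventually (\<lambda>n. \<omega> \<in> space M - A n) sequentially"
    show "eventually (\<lambda>n. \<forall>z\<in>C n. \<omega> \<notin> E n z) sequentially"
      using avoids eventually_ge_at_top[of N] by eventually_elim (auto simp: A_def)
  qed
qed

lemma AE_eventually_hausdorff_dist_le:
  fixes X :: "nat \<Rightarrow> 's \<Rightarrow> 'a::euclidean_space"
  assumes "prob_space M"
    and X_meas: "\<And>i. i \<ge> 1 \<Longrightarrow> X i \<in> borel_measurable M"
    and SR: "S \<subseteq> cball 0 R" and "0 \<le> R"
    and in_S: "AE \<omega> in M. \<forall>i\<ge>1. X i \<omega> \<in> S"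
    and radii: "\<And>n. n \<ge> N \<Longrightarrow> 0 < \<rho> n \<and> \<rho> n \<le> 2 \<and> 0 \<le> r n \<and> 0 \<le> p n"
    and miss: "\<And>n z. n \<ge> N \<Longrightarrow> z \<in> S \<Longrightarrow>
      measure M {\<omega>\<in>space M. \<forall>i\<in>{1..n}. X i \<omega> \<notin> ball z (r n)} \<le> p n"
    and summable: "summable (\<lambda>n. (2 * (R + 1) / \<rho> n) ^ DIM('a) * p n)"
  shows "AE \<omega> in M. eventually (\<lambda>n. hausdorff_dist ((\<lambda>i. X i \<omega>) ` {1..n}) S \<le> r n + \<rho> n) sequentially"
proof -
  have "\<exists>C. n \<ge> N \<longrightarrow> finite C \<and> C \<subseteq> S \<and> S \<subseteq> (\<Union>c\<in>C. ball c (\<rho> n)) \<and>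
      real (card C) \<le> (2 * (R + 1) / \<rho> n) ^ DIM('a)" for n
    using finite_net_card_bound[OF SR \<open>0 \<le> R\<close>, of "\<rho> n"] radii[of n] by metis
  then obtain C where C: "\<And>n. n \<ge> N \<Longrightarrow> finite (C n) \<and> C n \<subseteq> S \<and> S \<subseteq> (\<Union>c\<in>C n. ball c (\<rho> n)) \<and>
      real (card (C n)) \<le> (2 * (R + 1) / \<rho> n) ^ DIM('a)"
    by metis
  have "AE \<omega> in M. eventually (\<lambda>n. \<forall>z\<in>C n.
      \<omega> \<notin> {\<omega>\<in>space M. \<forall>i\<in>{1..n}. X i \<omega> \<notin> ball z (r n)}) sequentially"
  proof (rule AE_eventually_avoids_finite_families[OF \<open>prob_space M\<close> _ _ _ _ summable])
    fix n assume "n \<ge> N"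
    then show "real (card (C n)) * p n \<le> (2 * (R + 1) / \<rho> n) ^ DIM('a) * p n"
      using C radii by (intro mult_right_mono) auto
  next
    fix n z assume "n \<ge> N" "z \<in> C n"
    then show "measure M {\<omega>\<in>space M. \<forall>i\<in>{1..n}. X i \<omega> \<notin> ball z (r n)} \<le> p n"
      using miss C by blast
  qed (use C X_meas in \<open>auto intro!: sets_sample_avoids\<close>)
  with in_S AE_space show ?thesis
  proof eventually_elim
    case (elim \<omega>)
    show ?case
      using elim(3) eventually_ge_at_top[of "max N 1"]
    proof eventually_elim
      case (elim n)
      then have "n \<ge> N" "n \<ge> 1" by auto
      have "\<exists>a\<in>(\<lambda>i. X i \<omega>) ` {1..n}. dist z a < r n" if "z \<in> C n" for z
        using elim(1) that \<open>n \<ge> 1\<close> \<open>\<omega> \<in> space M\<close> by auto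
      then show ?case
        using C[OF \<open>n \<ge> N\<close>] radii[OF \<open>n \<ge> N\<close>] \<open>\<forall>i\<ge>1. X i \<omega> \<in> S\<close> \<open>n \<ge> 1\<close>
        by (intro hausdorff_dist_le_net) auto
    qed
  qed
qed

section \<open>The scale (ln n / n) powr (1 / d)\<close>

lemma ln_div_powr_facts:
  fixes d n :: nat
  assumes "0 < d" "2 \<le> n"
  shows "0 < (ln n / n) powr (1 / d)"
    and "((ln n / n) powr (1 / d)) ^ d = ln n / n"
    and "(n / ln n) powr (1 / d) * (ln n / n) powr (1 / d) = 1"
proof -
  have "0 < ln n" using assms(2) by simp
  then have pos: "0 < ln n / n" using assms(2) by simp
  then show "0 < (ln n / n) powr (1 / d)" using \<open>0 < ln n\<close> assms(2) by simp
  show "((ln n / n) powr (1 / d)) ^ d = ln n / n"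
    using pos \<open>0 < ln n\<close> assms by (simp add: root_powr_inverse[symmetric])
  have "(n / ln n) powr (1 / d) * (ln n / n) powr (1 / d) = (n / ln n * (ln n / n)) powr (1 / d)"
    by (rule powr_mult[symmetric])
  then show "(n / ln n) powr (1 / d) * (ln n / n) powr (1 / d) = 1"
    using \<open>0 < ln n\<close> assms(2) by simp
qed

lemma ln_div_powr_tendsto_zero:
  fixes d :: nat
  assumes "0 < d"
  shows "(\<lambda>n::nat. (ln n / n) powr (1 / d)) \<longlonglongrightarrow> 0"
proof (rule tendsto_zero_powrI)
  show "(\<lambda>n::nat. ln n / n) \<longlonglongrightarrow> 0" by real_asymp
  show "\<forall>\<^sub>F n in sequentially. 0 \<le> ln (real n) / real n"
    using eventually_ge_at_top[of "1::nat"] by eventually_elim simp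
  show "(\<lambda>n::nat. 1 / real d) \<longlonglongrightarrow> 1 / real d" by simp
  show "0 < 1 / real d" using assms by simp
qed

lemma eventually_scaled_le_of_le_ln_div_powr:
  fixes x :: "nat \<Rightarrow> real" and d :: nat
  assumes "eventually (\<lambda>n. x n \<le> b * (ln n / n) powr (1 / d)) sequentially" "0 < d"
  shows "eventually (\<lambda>n. (n / ln n) powr (1 / d) * x n \<le> b) sequentially"
  using assms(1) eventually_ge_at_top[of 2]
proof eventually_elim
  case (elim n)
  have "(n / ln n) powr (1 / d) * x n \<le> (n / ln n) powr (1 / d) * (b * (ln n / n) powr (1 / d))"
    using elim(1) by (rule mult_left_mono) simp
  also have "\<dots> = b"
    using ln_div_powr_facts(3)[OF assms(2) elim(2)] by (simp add: mult_ac)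
  finally show ?case .
qed

lemma summable_inverse_powr_ln:
  fixes \<beta> :: real
  assumes "1 < \<beta>"
  shows "summable (\<lambda>n. 1 / (n powr \<beta> * ln n))"
proof (rule summable_comparison_test'[of "\<lambda>n. n powr (-\<beta>)" 3])
  show "summable (\<lambda>n. real n powr (-\<beta>))"
    using assms by (subst summable_real_powr_iff) simp
next
  fix n :: nat assume "3 \<le> n"
  then have "1 \<le> ln n"
    using exp_le by (subst ln_ge_iff) linarith+
  then show "norm (1 / (n powr \<beta> * ln n)) \<le> n powr (-\<beta>)"
    using \<open>3 \<le> n\<close> by (simp add: powr_minus divide_simps)
qed

lemma summable_one_plus_div_powr_ln:
  fixes a :: "nat \<Rightarrow> real"
  assumes "1 < \<beta>" "summable (\<lambda>n. a n / (n powr \<beta> * ln n))"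
  shows "summable (\<lambda>n. (1 + a n) / (n powr \<beta> * ln n))"
  using summable_add[OF summable_inverse_powr_ln[OF assms(1)] assms(2)]
  by (simp add: add_divide_distrib)

lemma exp_neg_mass_le_powr:
  fixes c t \<kappa> \<eta> :: real and d n :: nat
  assumes "c ^ d = 2 / \<kappa>" "t ^ d = ln n / n" "0 < d" "2 \<le> n" "0 < \<kappa>" "0 \<le> \<eta>"
  shows "exp (- (n * \<kappa> * (c * (1 + \<eta>) * t) ^ d)) \<le> n powr (- 2 * (1 + \<eta>))"
proof -
  have "1 + \<eta> \<le> (1 + \<eta>) ^ d"
    using power_increasing[of 1 d "1 + \<eta>"] assms(3,6) by simp
  then have "2 * (1 + \<eta>) * ln n \<le> 2 * (1 + \<eta>) ^ d * ln n"
    using assms(4) by (intro mult_right_mono) auto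
  also have "\<dots> = n * \<kappa> * (c * (1 + \<eta>) * t) ^ d"
    using assms(1,2,4,5) by (simp add: power_mult_distrib)
  finally have "exp (- (n * \<kappa> * (c * (1 + \<eta>) * t) ^ d)) \<le> exp (- (2 * (1 + \<eta>) * ln n))"
    by simp
  also have "\<dots> = n powr (- 2 * (1 + \<eta>))"
    using assms(4) by (simp add: powr_def algebra_simps)
  finally show ?thesis .
qed

lemma net_size_times_powr_eq:
  fixes t c \<eta> a b :: real and d n :: nat
  assumes "t ^ d = ln n / n" "2 \<le> n"
  shows "(b / (c * t)) ^ d * ((1 + a) * n powr (- 2 * (1 + \<eta>)))
    = (b / c) ^ d * ((1 + a) / (n powr (1 + 2 * \<eta>) * ln n))"
proof -
  have size: "(b / (c * t)) ^ d = (b / c) ^ d * (n / ln n)"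
    using assms by (simp add: power_divide power_mult_distrib)
  have "n powr (- 2 * (1 + \<eta>)) = n powr (-1) * n powr (- (1 + 2 * \<eta>))"
    using powr_add[of "real n" "-1" "- (1 + 2 * \<eta>)"] by (simp add: algebra_simps)
  also have "\<dots> = 1 / (n * n powr (1 + 2 * \<eta>))"
    unfolding powr_minus_divide using assms(2) by simp
  finally have decay: "n powr (- 2 * (1 + \<eta>)) = 1 / (n * n powr (1 + 2 * \<eta>))" .
  have "real n / ln n * (1 / (n * n powr (1 + 2 * \<eta>))) = 1 / (n powr (1 + 2 * \<eta>) * ln n)"
    using assms(2) by simp
  then show ?thesis
    unfolding size decay
    by (metis (no_types, lifting) mult.assoc mult.left_commute times_divide_eq_right mult_1_right)
qed

lemma summable_net_size_times_powr:
  fixes d :: nat and \<alpha> :: "nat \<Rightarrow> real"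
  assumes "0 < d" "0 < \<eta>" "\<And>\<beta>::real. \<beta> > 1 \<Longrightarrow> summable (\<lambda>n. \<alpha> n / (n powr \<beta> * ln n))"
  shows "summable (\<lambda>n. (b / (c * (ln n / n) powr (1 / d))) ^ d * ((1 + \<alpha> n) * n powr (- 2 * (1 + \<eta>))))"
proof -
  have eq: "eventually (\<lambda>n. (b / (c * (ln n / n) powr (1 / d))) ^ d * ((1 + \<alpha> n) * n powr (- 2 * (1 + \<eta>)))
      = (b / c) ^ d * ((1 + \<alpha> n) / (n powr (1 + 2 * \<eta>) * ln n))) sequentially"
    using eventually_ge_at_top[of 2]
    by eventually_elim (intro net_size_times_powr_eq ln_div_powr_facts(2) \<open>0 < d\<close>)
  have "summable (\<lambda>n. (b / c) ^ d * ((1 + \<alpha> n) / (n powr (1 + 2 * \<eta>) * ln n)))"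
    using assms(2,3) by (intro summable_mult summable_one_plus_div_powr_ln) auto
  then show ?thesis
    unfolding summable_cong[OF eq] .
qed

lemma AE_eventually_scaled_hausdorff_dist_le:
  fixes X :: "nat \<Rightarrow> 's \<Rightarrow> 'a::euclidean_space"
  assumes M: "prob_space M"
    and X_meas: "\<And>i. i \<ge> 1 \<Longrightarrow> X i \<in> borel_measurable M"
    and "bounded S"
    and in_S: "AE \<omega> in M. \<forall>i\<ge>1. X i \<omega> \<in> S"
    and miss: "\<And>n z r. n \<ge> 1 \<Longrightarrow> z \<in> S \<Longrightarrow> 0 < r \<Longrightarrow> r \<le> lam \<Longrightarrow>
      measure M {\<omega>\<in>space M. \<forall>i\<in>{1..n}. X i \<omega> \<notin> ball z r}
        \<le> (1 + \<alpha> n) * exp (- (real n * \<kappa> * r ^ DIM('a)))"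
    and \<alpha>_nonneg: "\<And>n. n \<ge> 1 \<Longrightarrow> 0 \<le> \<alpha> n"
    and \<alpha>_sum: "\<And>\<beta>::real. \<beta> > 1 \<Longrightarrow> summable (\<lambda>n. \<alpha> n / (real n powr \<beta> * ln (real n)))"
    and "0 < \<kappa>" "0 < lam" "0 < \<eta>"
  shows "AE \<omega> in M. eventually (\<lambda>n. (real n / ln (real n)) powr (1 / real DIM('a))
      * hausdorff_dist ((\<lambda>i. X i \<omega>) ` {1..n}) S \<le> (2 / \<kappa>) powr (1 / real DIM('a)) * (1 + 2 * \<eta>))
    sequentially"
proof -
  obtain R where "0 < R" "\<And>x. x \<in> S \<Longrightarrow> norm x \<le> R"
    using \<open>bounded S\<close> by (auto simp: bounded_pos)
  then have SR: "S \<subseteq> cball 0 R" and R: "0 \<le> R" by auto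
  define d where "d = DIM('a)"
  have "0 < d" unfolding d_def by simp
  define c where "c = (2 / \<kappa>) powr (1 / d)"
  have "0 < c" using \<open>0 < \<kappa>\<close> by (simp add: c_def)
  have c_pow: "c ^ d = 2 / \<kappa>"
    using \<open>0 < \<kappa>\<close> \<open>0 < d\<close> by (simp add: c_def root_powr_inverse[symmetric])
  define t where "t n = (ln n / n) powr (1 / d)" for n :: nat
  note t = ln_div_powr_facts[OF \<open>0 < d\<close>, folded t_def]
  \<comment> \<open>Balls of radius r n around points of S have mass at least 2 (1 + \<eta>) ln n / n, so the
    sample misses such a ball with probability at most (1 + \<alpha> n) n powr (-2 (1 + \<eta>)); a net
    of mesh \<rho> n has O(n / ln n) points.\<close>
  define r where "r n = c * (1 + \<eta>) * t n" for n
  define \<rho> where "\<rho> n = c * \<eta> * t n" for n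
  have "eventually (\<lambda>n. t n < min (lam / (c * (1 + \<eta>))) (2 / (c * \<eta>))) sequentially"
    using ln_div_powr_tendsto_zero[OF \<open>0 < d\<close>, folded t_def] \<open>0 < c\<close> \<open>0 < lam\<close> \<open>0 < \<eta>\<close>
    by (intro order_tendstoD(2)) auto
  then have "eventually (\<lambda>n. r n \<le> lam \<and> \<rho> n \<le> 2 \<and> 2 \<le> n) sequentially"
    using eventually_ge_at_top[of 2] by eventually_elim
      (use \<open>0 < c\<close> \<open>0 < \<eta>\<close> in \<open>auto simp: r_def \<rho>_def less_divide_eq mult_ac intro: less_imp_le\<close>)
  then obtain N where "\<And>n. n \<ge> N \<Longrightarrow> r n \<le> lam \<and> \<rho> n \<le> 2 \<and> 2 \<le> n"
    by (auto simp: eventually_sequentially)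
  then have N: "2 \<le> n \<and> 0 < r n \<and> r n \<le> lam \<and> 0 < \<rho> n \<and> \<rho> n \<le> 2" if "n \<ge> N" for n
    using that t(1) \<open>0 < c\<close> \<open>0 < \<eta>\<close> by (force simp: r_def \<rho>_def)
  have miss_N: "measure M {\<omega>\<in>space M. \<forall>i\<in>{1..n}. X i \<omega> \<notin> ball z (r n)}
      \<le> (1 + \<alpha> n) * n powr (- 2 * (1 + \<eta>))" if "n \<ge> N" "z \<in> S" for n z
  proof -
    have n: "2 \<le> n" "0 < r n" "r n \<le> lam" using N[OF that(1)] by auto
    then have "measure M {\<omega>\<in>space M. \<forall>i\<in>{1..n}. X i \<omega> \<notin> ball z (r n)}
        \<le> (1 + \<alpha> n) * exp (- (real n * \<kappa> * r n ^ d))"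
      using miss[of n z "r n"] that(2) unfolding d_def by simp
    also have "\<dots> \<le> (1 + \<alpha> n) * n powr (- 2 * (1 + \<eta>))"
      using exp_neg_mass_le_powr[OF c_pow t(2)[OF n(1)] \<open>0 < d\<close> n(1) \<open>0 < \<kappa>\<close>, of \<eta>]
        \<alpha>_nonneg[of n] n(1) \<open>0 < \<eta>\<close>
      by (intro mult_left_mono) (auto simp: r_def)
    finally show ?thesis .
  qed
  have net_sum: "summable (\<lambda>n. (2 * (R + 1) / \<rho> n) ^ d * ((1 + \<alpha> n) * n powr (- 2 * (1 + \<eta>))))"
    unfolding \<rho>_def t_def
    using \<open>0 < d\<close> \<open>0 < \<eta>\<close> \<alpha>_sum by (rule summable_net_size_times_powr)
  have "AE \<omega> in M. eventually (\<lambda>n. hausdorff_dist ((\<lambda>i. X i \<omega>) ` {1..n}) S \<le> r n + \<rho> n) sequentially"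
    using net_sum \<alpha>_nonneg unfolding d_def
    by (intro AE_eventually_hausdorff_dist_le[where N=N and r=r and \<rho>=\<rho>,
          OF M X_meas SR R in_S _ miss_N]) (auto dest!: N)
  moreover have "r n + \<rho> n = c * (1 + 2 * \<eta>) * (ln n / n) powr (1 / d)" for n
    by (simp add: r_def \<rho>_def t_def algebra_simps)
  ultimately show ?thesis
    unfolding c_def d_def
    by (elim AE_mp) (auto intro!: AE_I2 eventually_scaled_le_of_le_ln_div_powr)
qed

lemma limsup_le_of_eventually_le:
  fixes u :: "nat \<Rightarrow> real"
  assumes "\<And>k. eventually (\<lambda>n. u n \<le> b k) sequentially" and "b \<longlonglongrightarrow> c"
  shows "limsup (\<lambda>n. ereal (u n)) \<le> ereal c"
proof (rule LIMSEQ_le_const)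
  show "(\<lambda>k. ereal (b k)) \<longlonglongrightarrow> ereal c"
    using assms(2) by simp
  show "\<exists>N. \<forall>k\<ge>N. limsup (\<lambda>n. ereal (u n)) \<le> ereal (b k)"
    using assms(1) by (auto intro!: Limsup_bounded elim: eventually_mono)
qed

theorem mainTheorem4:
  fixes M :: "'s measure"
    and X :: "nat \<Rightarrow> 's \<Rightarrow> 'a::euclidean_space"
    and f :: "'a \<Rightarrow> real"
    and g :: "nat \<Rightarrow> (nat \<Rightarrow> 'a) \<Rightarrow> real"
    and \<alpha> :: "nat \<Rightarrow> real"
    and S :: "'a set"
    and \<delta> lam :: real
  assumes "prob_space M"
    and "compact S"
    and f_nonneg: "\<And>x. f x \<ge> 0"
    and marg: "\<And>i. i \<ge> 1 \<Longrightarrow> distributed M lborel (X i) (\<lambda>x. ennreal (f x))"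
    and g_nonneg: "\<And>n x. g n x \<ge> 0"
    and joint: "\<And>n. n \<ge> 1 \<Longrightarrow>
       distributed M (PiM {1..n} (\<lambda>_. lborel)) (\<lambda>\<omega>. \<lambda>i\<in>{1..n}. X i \<omega>) (\<lambda>x. ennreal (g n x))"
    and AI: "\<And>n. n \<ge> 1 \<Longrightarrow> AI_cond n (g n) f (\<alpha> n)"
    and supp: "measure_support (distr M lborel (X 1)) = S"
    and "\<delta> > 0" and "lam > 0"
    and std: "standard_set S (distr M lborel (X 1)) \<delta> lam"
    and alpha_sum: "\<And>\<beta>::real. \<beta> > 1 \<Longrightarrow> summable (\<lambda>n. \<alpha> n / (real n powr \<beta> * ln (real n)))"
  shows "AE \<omega> in M.
    limsup (\<lambda>n. ereal ((real n / ln (real n)) powr (1 / real DIM('a))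
                  * hausdorff_dist ((\<lambda>i. X i \<omega>) ` {1..n}) S))
      \<le> ereal ((2 / (\<delta> * unit_ball_vol TYPE('a))) powr (1 / real DIM('a)))"
proof -
  interpret prob_space M by fact
  have X_meas: "X i \<in> borel_measurable M" if "i \<ge> 1" for i
    using distributed_measurable[OF marg[OF that]] by simp
  have in_S: "AE \<omega> in M. \<forall>i\<ge>1. X i \<omega> \<in> S"
    using marg supp by (rule AE_sample_in_support)
  obtain y where "0 < f y"
    using distributed_density_pos_somewhere[OF \<open>prob_space M\<close> marg[OF order_refl]] by auto
  then have \<alpha>_nonneg: "0 \<le> \<alpha> n" if "n \<ge> 1" for n
    using AI_cond_nonneg[OF AI[OF that] f_nonneg] by blast
  have miss: "measure M {\<omega>\<in>space M. \<forall>i\<in>{1..n}. X i \<omega> \<notin> ball z r}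
      \<le> (1 + \<alpha> n) * exp (- (real n * (\<delta> * unit_ball_vol TYPE('a)) * r ^ DIM('a)))"
    if "n \<ge> 1" "z \<in> S" "0 < r" "r \<le> lam" for n z r
    using that by (intro prob_sample_misses_ball_le[OF \<open>prob_space M\<close> f_nonneg marg[OF order_refl]
          joint AI \<alpha>_nonneg std])
  define c where "c = (2 / (\<delta> * unit_ball_vol TYPE('a))) powr (1 / real DIM('a))"
  have "AE \<omega> in M. eventually (\<lambda>n. (real n / ln (real n)) powr (1 / real DIM('a))
      * hausdorff_dist ((\<lambda>i. X i \<omega>) ` {1..n}) S \<le> c * (1 + 2 * (1 / Suc k))) sequentially" for k
    unfolding c_def
    by (rule AE_eventually_scaled_hausdorff_dist_le[where lam=lam, OF \<open>prob_space M\<close> X_meas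
          compact_imp_bounded[OF \<open>compact S\<close>] in_S miss \<alpha>_nonneg alpha_sum])
       (use \<open>0 < \<delta>\<close> \<open>0 < lam\<close> unit_ball_vol_pos[where 'a='a] in auto)
  then have "AE \<omega> in M. \<forall>k. eventually (\<lambda>n. (real n / ln (real n)) powr (1 / real DIM('a))
      * hausdorff_dist ((\<lambda>i. X i \<omega>) ` {1..n}) S \<le> c * (1 + 2 * (1 / Suc k))) sequentially"
    by (simp add: AE_all_countable)
  moreover have "(\<lambda>k. c * (1 + 2 * (1 / Suc k))) \<longlonglongrightarrow> c * (1 + 2 * 0)"
    by (intro tendsto_intros LIMSEQ_Suc[OF lim_1_over_n])
  then have lim: "(\<lambda>k. c * (1 + 2 * (1 / Suc k))) \<longlonglongrightarrow> c"
    by simp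
  ultimately show ?thesis
    unfolding c_def[symmetric]
    by (elim AE_mp) (auto intro!: AE_I2 limsup_le_of_eventually_le[OF _ lim])
qed

end
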